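(* (Strong duality.) For all $x\in\mathbb{R}^n$, \[ \sup_{\mathbf{u}\in\mathcal{U}_{\mathbb{F}}(0)} J(0,x;\mathbf{u})=\inf_{h\in\mathcal{M}_{\mathbb{F}}(0)}\mathbb{E}_{0,x}\Big[\sup_{\mathbf{u}\in\mathcal{U}(0)}\Big\{\Lambda(x_T)+\int_0^T g(t,x_t,u_t)\,dt-h(\mathbf{u},\mathbf{w})\Big\}\Big], \] and the infimum on the right is attained by the penalty $h^*(\mathbf{u},\mathbf{w})=\Lambda(x_T)+\int_0^T g(t,x_t,u_t)\,dt-V(0,x)$, where $V(0,x)=\sup_{\mathbf{u}\in\mathcal{U}_{\mathbb{F}}(0)}J(0,x;\mathbf{u})$.
   Context: Let $(\Omega,\mathcal{F},\mathbb{P})$ carry an $m$-dimensional Brownian motion $\mathbf{w}=(w_t)_{t\in[0,T]}$ with natural augmented filtration $\mathbb{F}=\{\mathcal{F}_t\}$, $\mathcal{F}=\mathcal{F}_T$. The controlled state $x_t\in\mathbb{R}^n$ follows $dx_t=b(t,x_t,u_t)\,dt+\sigma(t,x_t)\,dw_t$, $0\le t\le T$, where $u_t\in\mathcal{U}\subset\mathbb{R}^{d_u}$, $b:[0,T]\times\mathbb{R}^n\times\mathcal{U}\to\mathbb{R}^n$, $\sigma:[0,T]\times\mathbb{R}^n\to\mathbb{R}^{n\times m}$ are continuous, with linear growth $\|b(t,x,u)\|+\|\sigma(t,x)\|\le C_1(1+\|x\|+\|u\|)$ and Lipschitz in $(t,x)$ uniformly in $u$. $\mathcal{U}_{\mathbb{F}}(t)$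 denotes admissible strategies at time $t$: $\mathbb{F}$-progressively measurable $\mathcal{U}$-valued $\mathbf{u}=(u_s)_{s\in[t,T]}$ with $\mathbb{E}[\int_t^T\|u_s\|^2ds]<\infty$ and $\mathbb{E}_{t,x}[\sup_{s\in[t,T]}\|x_s\|^2]<\infty$, where $\mathbb{E}_{t,x}[\cdot]=\mathbb{E}[\cdot\mid x_t=x]$. $\mathcal{U}(t)$ denotes all $\mathcal{B}([t,T])\times\mathcal{F}$-measurable $\mathcal{U}$-valued processes (possibly anticipative). It is assumed that for each $\mathbf{u}\in\mathcal{U}(0)$ and $x_0=x$ the state equation has a unique $\mathcal{B}([0,T])\times\mathcal{F}$-measurable solution $(x_t)$, which is the usual Itô solution when $\mathbf{u}\in\mathcal{U}_{\mathbb{F}}(0)$. $\Lambda:\mathbb{R}^n\to\mathbb{R}$ and $g:[0,T]\times\mathbb{R}^n\times\mathcal{U}\to\mathbb{R}$ have polynomial growth ($|\Lambda(x)|\le C_\Lambda(1+\|x\|^{c_\Lambda})$, $|g(t,x,u)|\le C_g(1+\|x\|^{c_g}+\|u\|^{c_g})$). $J(t,x;\mathbf{u})=\mathbb{E}_{t,x}[\Lambda(x_T)+\int_t^T g(s,x_s,u_s)ds]$. $\mathcal{M}_{\mathbb{F}}(0)$ is the set of functions $h(\mathbf{u},\mathbf{w})$ of $\mathbf{u}\in\mathcal{U}(0)$ and a Brownian path $\mathbf{w}$ such that $\mathbb{E}_{0,x}[h(\mathbf{u},\mathbf{w})]\le0$ for all $x\in\mathbb{R}^n$ and all $\mathbf{u}\in\mathcal{U}_{\mathbb{F}}(0)$.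 *)

theory Defs
  imports "HOL-Probability.Probability"
begin


definition brownian_motion :: "'w measure \<Rightarrow> real \<Rightarrow> (real \<Rightarrow> 'w \<Rightarrow> real^('m::finite)) \<Rightarrow> bool" where
  "brownian_motion P T W \<longleftrightarrow>
     prob_space P \<and>
     (\<forall>t\<in>{0..T}. W t \<in> borel_measurable P) \<and>
     (\<forall>\<omega>\<in>space P. W 0 \<omega> = 0 \<and> continuous_on {0..T} (\<lambda>t. W t \<omega>)) \<and>
     (\<forall>ts. sorted ts \<and> set ts \<subseteq> {0..T} \<longrightarrow>
        prob_space.indep_vars P (\<lambda>_. borel) (\<lambda>j \<omega>. W (ts ! Suc j) \<omega> - W (ts ! j) \<omega>)
          {..<length ts - 1}) \<and>
     (\<forall>s t. 0 \<le> s \<and> s < t \<and> t \<le> T \<longrightarrow>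
        prob_space.indep_vars P (\<lambda>_. borel) (\<lambda>i \<omega>. (W t \<omega> - W s \<omega>) $ i) UNIV \<and>
        (\<forall>i. distributed P lborel (\<lambda>\<omega>. (W t \<omega> - W s \<omega>) $ i) (normal_density 0 (sqrt (t - s)))))"

definition nat_filt :: "'w measure \<Rightarrow> (real \<Rightarrow> 'w \<Rightarrow> real^('m::finite)) \<Rightarrow> real \<Rightarrow> 'w set set" where
  "nat_filt P W t = sigma_sets (space P)
     ({(W s) -` B \<inter> space P | s B. s \<in> {0..t} \<and> B \<in> sets borel} \<union>
      {N. N \<subseteq> space P \<and> (\<exists>A\<in>null_sets P. N \<subseteq> A)})"

definition filt_measure :: "'w measure \<Rightarrow> (real \<Rightarrow> 'w \<Rightarrow> real^('m::finite)) \<Rightarrow> real \<Rightarrow> 'w measure" where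
  "filt_measure P W t = sigma (space P) (nat_filt P W t)"

definition progressive :: "'w measure \<Rightarrow> (real \<Rightarrow> 'w \<Rightarrow> real^('m::finite)) \<Rightarrow> real \<Rightarrow> (real \<Rightarrow> 'w \<Rightarrow> real^('d::finite)) \<Rightarrow> bool" where
  "progressive P W T u \<longleftrightarrow> (\<forall>t\<in>{0..T}.
     (\<lambda>(s,\<omega>). u s \<omega>) \<in> borel_measurable (restrict_space lborel {0..t} \<Otimes>\<^sub>M filt_measure P W t))"

text \<open>U(0): all B([0,T]) x F - measurable Uset-valued processes (possibly anticipative).\<close>
definition Uall :: "'w measure \<Rightarrow> real \<Rightarrow> (real^'d) set \<Rightarrow> (real \<Rightarrow> 'w \<Rightarrow> real^('d::finite)) set" where
  "Uall P T Uset = {u. (\<lambda>(s,\<omega>). u s \<omega>) \<in> borel_measurable (restrict_space lborel {0..T} \<Otimes>\<^sub>M P) \<and>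
                     (\<forall>s\<in>{0..T}. \<forall>\<omega>\<in>space P. u s \<omega> \<in> Uset)}"

text \<open>U_F(0) relative to the initial state x: progressively measurable, Uset-valued,
  E[int_0^T |u|^2] < oo and E_{0,x}[sup_[0,T] |x_s|^2] < oo.  X x u s \<omega> is the state.\<close>
definition UF :: "'w measure \<Rightarrow> (real \<Rightarrow> 'w \<Rightarrow> real^('m::finite)) \<Rightarrow> real \<Rightarrow> (real^'d) set
     \<Rightarrow> (real^'n \<Rightarrow> (real \<Rightarrow> 'w \<Rightarrow> real^('d::finite)) \<Rightarrow> real \<Rightarrow> 'w \<Rightarrow> real^'n) \<Rightarrow> real^'n \<Rightarrow> (real \<Rightarrow> 'w \<Rightarrow> real^('d::finite)) set" where
  "UF P W T Uset X x = {u. progressive P W T u \<and>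
     (\<forall>s\<in>{0..T}. \<forall>\<omega>\<in>space P. u s \<omega> \<in> Uset) \<and>
     (\<integral>\<^sup>+\<omega>. (\<integral>\<^sup>+s\<in>{0..T}. ennreal ((norm (u s \<omega>))\<^sup>2) \<partial>lborel) \<partial>P) < \<infinity> \<and>
     (\<integral>\<^sup>+\<omega>. (SUP s\<in>{0..T}. ennreal ((norm (X x u s \<omega>))\<^sup>2)) \<partial>P) < \<infinity>}"

text \<open>Expectation of an extended-real random variable (quasi-integral):
  E[f] = E[f^+] - E[f^-], with the convention E[f] = +oo whenever E[f^+] = +oo.\<close>
definition Eer :: "'w measure \<Rightarrow> ('w \<Rightarrow> ereal) \<Rightarrow> ereal" where
  "Eer P f = (if (\<integral>\<^sup>+\<omega>. e2ennreal (f \<omega>) \<partial>P) = \<infinity> then \<infinity>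
              else enn2ereal (\<integral>\<^sup>+\<omega>. e2ennreal (f \<omega>) \<partial>P) - enn2ereal (\<integral>\<^sup>+\<omega>. e2ennreal (- f \<omega>) \<partial>P))"

definition reward :: "real \<Rightarrow> (real^'n \<Rightarrow> real) \<Rightarrow> (real \<Rightarrow> real^'n \<Rightarrow> real^'d \<Rightarrow> real)
     \<Rightarrow> (real^'n \<Rightarrow> (real \<Rightarrow> 'w \<Rightarrow> real^('d::finite)) \<Rightarrow> real \<Rightarrow> 'w \<Rightarrow> real^'n) \<Rightarrow> real^'n \<Rightarrow> (real \<Rightarrow> 'w \<Rightarrow> real^('d::finite)) \<Rightarrow> 'w \<Rightarrow> real" where
  "reward T Lam g X x u \<omega> = Lam (X x u T \<omega>) + (LINT s:{0..T}|lborel. g s (X x u s \<omega>) (u s \<omega>))"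

definition Jval :: "'w measure \<Rightarrow> real \<Rightarrow> (real^'n \<Rightarrow> real) \<Rightarrow> (real \<Rightarrow> real^'n \<Rightarrow> real^'d \<Rightarrow> real)
     \<Rightarrow> (real^'n \<Rightarrow> (real \<Rightarrow> 'w \<Rightarrow> real^('d::finite)) \<Rightarrow> real \<Rightarrow> 'w \<Rightarrow> real^'n) \<Rightarrow> real^'n \<Rightarrow> (real \<Rightarrow> 'w \<Rightarrow> real^('d::finite)) \<Rightarrow> ereal" where
  "Jval P T Lam g X x u = Eer P (\<lambda>\<omega>. ereal (reward T Lam g X x u \<omega>))"

definition MF :: "'w measure \<Rightarrow> (real \<Rightarrow> 'w \<Rightarrow> real^('m::finite)) \<Rightarrow> real \<Rightarrow> (real^'d) set
     \<Rightarrow> (real^'n \<Rightarrow> (real \<Rightarrow> 'w \<Rightarrow> real^('d::finite)) \<Rightarrow> real \<Rightarrow> 'w \<Rightarrow> real^'n) \<Rightarrow> ((real \<Rightarrow> 'w \<Rightarrow> real^('d::finite)) \<Rightarrow> 'w \<Rightarrow> real) set" where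
  "MF P W T Uset X = {h. \<forall>x. \<forall>u\<in>UF P W T Uset X x.
       h u \<in> borel_measurable P \<and> Eer P (\<lambda>\<omega>. ereal (h u \<omega>)) \<le> 0}"

end

theory Submission
  imports Defs
begin

text \<open>Weak duality: for a penalty h with E[h(u)] \<le> 0 on admissible u, E[R(u)] \<le> E[R(u) - h(u)]
  is bounded by the expected pathwise supremum of R - h over all, possibly anticipative, controls.
  Strong duality: for h = R - V with V the primal value, R - h is the constant V, so the dual
  objective equals V. The argument is pathwise; of the state it only needs measurability and the
  moment bound (which makes U_F(0) independent of the initial state).\<close>

lemma ennreal_add_le: "ennreal (a + b) \<le> ennreal a + ennreal b"
proof -
  have "ennreal (a + b) \<le> ennreal (max a 0 + max b 0)"
    by (intro ennreal_leI) auto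
  also have "\<dots> = ennreal a + ennreal b"
    by (simp add: ennreal_plus max_def ennreal_neg)
  finally show ?thesis .
qed

lemma nn_integral_ennreal_add_le:
  assumes "f \<in> borel_measurable M" "g \<in> borel_measurable M"
  shows "(\<integral>\<^sup>+x. ennreal (f x + g x) \<partial>M) \<le> (\<integral>\<^sup>+x. ennreal (f x) \<partial>M) + (\<integral>\<^sup>+x. ennreal (g x) \<partial>M)"
proof -
  have "(\<integral>\<^sup>+x. ennreal (f x + g x) \<partial>M) \<le> (\<integral>\<^sup>+x. ennreal (f x) + ennreal (g x) \<partial>M)"
    by (intro nn_integral_mono ennreal_add_le)
  also have "\<dots> = (\<integral>\<^sup>+x. ennreal (f x) \<partial>M) + (\<integral>\<^sup>+x. ennreal (g x) \<partial>M)"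
    using assms by (intro nn_integral_add) auto
  finally show ?thesis .
qed

lemma nn_integral_ennreal_add_finite:
  assumes "f \<in> borel_measurable M" "g \<in> borel_measurable M"
    and "(\<integral>\<^sup>+x. ennreal (f x) \<partial>M) \<noteq> \<infinity>" "(\<integral>\<^sup>+x. ennreal (g x) \<partial>M) \<noteq> \<infinity>"
  shows "(\<integral>\<^sup>+x. ennreal (f x + g x) \<partial>M) \<noteq> \<infinity>"
  using nn_integral_ennreal_add_le[OF assms(1,2)] assms(3,4) by (auto simp: top_unique)

lemma Eer_ereal:
  assumes "f \<in> borel_measurable P"
  shows "Eer P (\<lambda>\<omega>. ereal (f \<omega>)) =
     (if (\<integral>\<^sup>+\<omega>. ennreal (f \<omega>) \<partial>P) = \<infinity> then \<infinity>
      else if (\<integral>\<^sup>+\<omega>. ennreal (- f \<omega>) \<partial>P) = \<infinity> then -\<infinity>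
      else ereal (integral\<^sup>L P f))"
proof -
  have enn2ereal_finite: "enn2ereal a = ereal (enn2real a)" if "a \<noteq> \<infinity>" for a :: ennreal
    using that by (cases a rule: ennreal_cases) auto
  show ?thesis
    using assms
    by (auto simp: Eer_def enn2ereal_finite real_integrable_def real_lebesgue_integral_def)
qed

lemma Eer_mono:
  assumes "\<And>\<omega>. \<omega> \<in> space P \<Longrightarrow> f \<omega> \<le> g \<omega>"
  shows "Eer P f \<le> Eer P g"
proof -
  have pos: "(\<integral>\<^sup>+\<omega>. e2ennreal (f \<omega>) \<partial>P) \<le> (\<integral>\<^sup>+\<omega>. e2ennreal (g \<omega>) \<partial>P)"
    using assms by (intro nn_integral_mono) (simp add: e2ennreal_mono)
  have neg: "(\<integral>\<^sup>+\<omega>. e2ennreal (- g \<omega>) \<partial>P) \<le> (\<integral>\<^sup>+\<omega>. e2ennreal (- f \<omega>) \<partial>P)"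
    using assms by (intro nn_integral_mono) (simp add: e2ennreal_mono)
  show ?thesis
  proof (cases "(\<integral>\<^sup>+\<omega>. e2ennreal (g \<omega>) \<partial>P) = \<infinity>")
    case False
    with pos have "(\<integral>\<^sup>+\<omega>. e2ennreal (f \<omega>) \<partial>P) \<noteq> \<infinity>" by (auto simp: top_unique)
    with False pos neg show ?thesis
      unfolding Eer_def by (auto intro!: ereal_minus_mono simp: less_eq_ennreal.rep_eq)
  qed (simp add: Eer_def)
qed

lemma (in prob_space) Eer_diff_const:
  assumes f: "f \<in> borel_measurable M"
  shows "Eer M (\<lambda>\<omega>. ereal (f \<omega> - c)) = Eer M (\<lambda>\<omega>. ereal (f \<omega>)) - ereal c"
proof -
  have const: "(\<integral>\<^sup>+\<omega>. ennreal a \<partial>M) \<noteq> \<infinity>" for a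
    by (simp add: emeasure_space_1)
  have shift: "(\<integral>\<^sup>+\<omega>. ennreal (k \<omega> + a) \<partial>M) \<noteq> \<infinity>"
    if "k \<in> borel_measurable M" "(\<integral>\<^sup>+\<omega>. ennreal (k \<omega>) \<partial>M) \<noteq> \<infinity>" for k a
    using nn_integral_ennreal_add_finite[OF that(1) _ that(2) const] by simp
  have "(\<integral>\<^sup>+\<omega>. ennreal (f \<omega> - c) \<partial>M) = \<infinity> \<longleftrightarrow> (\<integral>\<^sup>+\<omega>. ennreal (f \<omega>) \<partial>M) = \<infinity>"
    using shift[of f "- c"] shift[of "\<lambda>\<omega>. f \<omega> - c" c] f by auto
  moreover have "(\<integral>\<^sup>+\<omega>. ennreal (- (f \<omega> - c)) \<partial>M) = \<infinity> \<longleftrightarrow> (\<integral>\<^sup>+\<omega>. ennreal (- f \<omega>) \<partial>M) = \<infinity>"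
    using shift[of "\<lambda>\<omega>. - f \<omega>" c] shift[of "\<lambda>\<omega>. - (f \<omega> - c)" "- c"] f by auto
  moreover have "integral\<^sup>L M (\<lambda>\<omega>. f \<omega> - c) = integral\<^sup>L M f - c" if "integrable M f"
    using that by (simp add: prob_space)
  ultimately show ?thesis
    using f by (simp add: Eer_ereal real_integrable_def)
qed

lemma (in prob_space) Eer_const: "Eer M (\<lambda>_. ereal c) = ereal c"
  by (simp add: Eer_ereal[where f = "\<lambda>_. c", simplified] emeasure_space_1 prob_space)

lemma Eer_le_Eer_diff_nonpos:
  assumes f: "f \<in> borel_measurable P" and h: "h \<in> borel_measurable P"
    and h_nonpos: "Eer P (\<lambda>\<omega>. ereal (h \<omega>)) \<le> 0"
  shows "Eer P (\<lambda>\<omega>. ereal (f \<omega>)) \<le> Eer P (\<lambda>\<omega>. ereal (f \<omega> - h \<omega>))"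
proof (cases "(\<integral>\<^sup>+\<omega>. ennreal (f \<omega> - h \<omega>) \<partial>P) = \<infinity>")
  case True
  with f h show ?thesis by (simp add: Eer_ereal)
next
  case fh_pos: False
  have fh: "(\<lambda>\<omega>. f \<omega> - h \<omega>) \<in> borel_measurable P" using f h by auto
  have h_pos: "(\<integral>\<^sup>+\<omega>. ennreal (h \<omega>) \<partial>P) \<noteq> \<infinity>"
    using h_nonpos h by (auto simp: Eer_ereal split: if_splits)
  have f_pos: "(\<integral>\<^sup>+\<omega>. ennreal (f \<omega>) \<partial>P) \<noteq> \<infinity>"
    using nn_integral_ennreal_add_finite[OF fh h fh_pos h_pos] by simp
  show ?thesis
  proof (cases "(\<integral>\<^sup>+\<omega>. ennreal (- f \<omega>) \<partial>P) = \<infinity>")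
    case True
    with f f_pos show ?thesis by (simp add: Eer_ereal)
  next
    case f_neg: False
    have h_neg: "(\<integral>\<^sup>+\<omega>. ennreal (- h \<omega>) \<partial>P) \<noteq> \<infinity>"
      using nn_integral_ennreal_add_finite[OF fh _ fh_pos f_neg] f by simp
    have fh_neg: "(\<integral>\<^sup>+\<omega>. ennreal (- (f \<omega> - h \<omega>)) \<partial>P) \<noteq> \<infinity>"
      using nn_integral_ennreal_add_finite[OF _ h f_neg h_pos] f by simp
    have "integrable P f" "integrable P h"
      using f h f_pos f_neg h_pos h_neg by (simp_all add: real_integrable_def)
    moreover have "integral\<^sup>L P h \<le> 0"
      using h_nonpos h h_pos h_neg by (simp add: Eer_ereal)
    ultimately show ?thesis
      using f fh f_pos f_neg fh_pos fh_neg by (simp add: Eer_ereal)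
  qed
qed

definition penalties :: "'w measure \<Rightarrow> 'u set \<Rightarrow> ('u \<Rightarrow> 'w \<Rightarrow> real) set" where
  "penalties P A = {h. \<forall>u\<in>A. h u \<in> borel_measurable P \<and> Eer P (\<lambda>\<omega>. ereal (h u \<omega>)) \<le> 0}"

definition dual_objective ::
    "'w measure \<Rightarrow> 'u set \<Rightarrow> ('u \<Rightarrow> 'w \<Rightarrow> real) \<Rightarrow> ('u \<Rightarrow> 'w \<Rightarrow> real) \<Rightarrow> ereal" where
  "dual_objective P B R h = Eer P (\<lambda>\<omega>. SUP u\<in>B. ereal (R u \<omega> - h u \<omega>))"

lemma weak_duality:
  assumes "u \<in> A" "A \<subseteq> B" "R u \<in> borel_measurable P" "h \<in> penalties P A"
  shows "Eer P (\<lambda>\<omega>. ereal (R u \<omega>)) \<le> dual_objective P B R h"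
proof -
  have "Eer P (\<lambda>\<omega>. ereal (R u \<omega>)) \<le> Eer P (\<lambda>\<omega>. ereal (R u \<omega> - h u \<omega>))"
    using assms by (intro Eer_le_Eer_diff_nonpos) (auto simp: penalties_def)
  also have "\<dots> \<le> dual_objective P B R h"
    unfolding dual_objective_def using assms by (intro Eer_mono SUP_upper) auto
  finally show ?thesis .
qed

lemma (in prob_space) shifted_reward_in_penalties:
  assumes "\<And>u. u \<in> A \<Longrightarrow> R u \<in> borel_measurable M"
    and "(SUP u\<in>A. Eer M (\<lambda>\<omega>. ereal (R u \<omega>))) \<le> ereal c"
  shows "(\<lambda>u \<omega>. R u \<omega> - c) \<in> penalties M A"
proof -
  have "Eer M (\<lambda>\<omega>. ereal (R u \<omega> - c)) \<le> 0" if "u \<in> A" for u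
  proof -
    have "Eer M (\<lambda>\<omega>. ereal (R u \<omega>)) \<le> ereal c"
      using assms(2) SUP_upper[OF that] by (rule order.trans[rotated])
    then show ?thesis
      using assms(1)[OF that] by (simp add: Eer_diff_const ereal_minus_le_iff)
  qed
  with assms(1) show ?thesis by (auto simp: penalties_def)
qed

lemma (in prob_space) dual_objective_shifted_reward_le:
  "dual_objective M B R (\<lambda>u \<omega>. R u \<omega> - c) \<le> ereal c"
proof -
  have "dual_objective M B R (\<lambda>u \<omega>. R u \<omega> - c) \<le> Eer M (\<lambda>_. ereal c)"
    unfolding dual_objective_def by (intro Eer_mono SUP_least) simp
  then show ?thesis by (simp add: Eer_const)
qed

lemma (in prob_space) strong_duality:
  assumes "A \<subseteq> B" "\<And>u. u \<in> A \<Longrightarrow> R u \<in> borel_measurable M"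
  shows "(SUP u\<in>A. Eer M (\<lambda>\<omega>. ereal (R u \<omega>))) = (INF h\<in>penalties M A. dual_objective M B R h)"
    (is "?V = ?D")
proof (rule antisym)
  show "?V \<le> ?D"
    using assms by (intro INF_greatest SUP_least weak_duality) auto
  have D_le: "?D \<le> ereal c" if "?V \<le> ereal c" for c
    using INF_lower[OF shifted_reward_in_penalties[OF assms(2) that]]
      dual_objective_shifted_reward_le by (rule order.trans)
  show "?D \<le> ?V"
  proof (cases ?V)
    case (real r)
    then show ?thesis using D_le[of r] by simp
  next
    case MInf
    then show ?thesis using D_le by (simp add: ereal_bot)
  qed simp
qed

lemma (in prob_space) strong_duality_attained:
  assumes "A \<subseteq> B" "\<And>u. u \<in> A \<Longrightarrow> R u \<in> borel_measurable M"
    and finite: "\<bar>SUP u\<in>A. Eer M (\<lambda>\<omega>. ereal (R u \<omega>))\<bar> \<noteq> \<infinity>"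
  defines "V \<equiv> real_of_ereal (SUP u\<in>A. Eer M (\<lambda>\<omega>. ereal (R u \<omega>)))"
  shows "(\<lambda>u \<omega>. R u \<omega> - V) \<in> penalties M A"
    and "dual_objective M B R (\<lambda>u \<omega>. R u \<omega> - V) = (SUP u\<in>A. Eer M (\<lambda>\<omega>. ereal (R u \<omega>)))"
proof -
  have V: "(SUP u\<in>A. Eer M (\<lambda>\<omega>. ereal (R u \<omega>))) = ereal V"
    using finite unfolding V_def by auto
  then show "(\<lambda>u \<omega>. R u \<omega> - V) \<in> penalties M A"
    using assms(2) by (intro shifted_reward_in_penalties) auto
  have "A \<noteq> {}"
    using V by (auto simp: bot_ereal_def)
  with assms(1) have "B \<noteq> {}" by blast
  then show "dual_objective M B R (\<lambda>u \<omega>. R u \<omega> - V) = (SUP u\<in>A. Eer M (\<lambda>\<omega>. ereal (R u \<omega>)))"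
    by (simp add: V dual_objective_def Eer_const)
qed

lemma reward_measurable:
  assumes "0 \<le> T"
    and X: "(\<lambda>(s,\<omega>). X x u s \<omega>) \<in> borel_measurable (restrict_space lborel {0..T} \<Otimes>\<^sub>M P)"
    and u: "(\<lambda>(s,\<omega>). u s \<omega>) \<in> borel_measurable (restrict_space lborel {0..T} \<Otimes>\<^sub>M P)"
    and Lam: "Lam \<in> borel_measurable borel"
    and g: "(\<lambda>(t,y,v). g t y v) \<in> borel_measurable borel"
  shows "reward T Lam g X x u \<in> borel_measurable P"
proof -
  let ?R = "restrict_space lborel {0..T}"
  have "(\<lambda>\<omega>. (T, \<omega>)) \<in> measurable P (?R \<Otimes>\<^sub>M P)"
    using assms(1) by (intro measurable_Pair) (auto simp: space_restrict_space)
  from measurable_comp[OF this X] have XT: "(\<lambda>\<omega>. X x u T \<omega>) \<in> borel_measurable P"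
    by (simp add: o_def)
  have "(\<lambda>(s::real, \<omega>). s) \<in> borel_measurable (?R \<Otimes>\<^sub>M P)"
    unfolding case_prod_beta
    by (rule measurable_compose[OF measurable_fst]) (rule measurable_restrict_space1, simp)
  with X u have "(\<lambda>z. (case z of (s,\<omega>) \<Rightarrow> s, case z of (s,\<omega>) \<Rightarrow> X x u s \<omega>, case z of (s,\<omega>) \<Rightarrow> u s \<omega>))
      \<in> borel_measurable (?R \<Otimes>\<^sub>M P)"
    by (intro borel_measurable_Pair) auto
  from measurable_comp[OF this g]
  have "(\<lambda>(\<omega>,s). g s (X x u s \<omega>) (u s \<omega>)) \<in> borel_measurable (P \<Otimes>\<^sub>M ?R)"
    by (subst measurable_pair_swap_iff) (simp add: o_def case_prod_beta)
  then have "(\<lambda>\<omega>. integral\<^sup>L ?R (\<lambda>s. g s (X x u s \<omega>) (u s \<omega>))) \<in> borel_measurable P"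
    using sigma_finite_measure.borel_measurable_lebesgue_integral[of ?R]
      sigma_finite_measure_restrict_space[OF lborel.sigma_finite_measure_axioms, of "{0..T}"]
    by (auto simp: case_prod_beta)
  moreover have "(LINT s:{0..T}|lborel. g s (X x u s \<omega>) (u s \<omega>))
      = integral\<^sup>L ?R (\<lambda>s. g s (X x u s \<omega>) (u s \<omega>))" for \<omega>
    by (simp add: set_lebesgue_integral_def integral_restrict_space)
  ultimately show ?thesis
    using measurable_comp[OF XT Lam] unfolding reward_def
    by (intro borel_measurable_add) (auto simp: o_def)
qed

lemma UF_subset_Uall:
  assumes "0 \<le> T" and F_T: "sets P = nat_filt P W T"
  shows "UF P W T Uset X x \<subseteq> Uall P T Uset"
proof
  fix u assume u: "u \<in> UF P W T Uset X x"
  have "sets (filt_measure P W T) = sets P"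
    unfolding filt_measure_def F_T[symmetric]
    by (simp add: sets_measure_of sets.space_closed sets.sigma_sets_eq)
  then have "sets (restrict_space lborel {0..T} \<Otimes>\<^sub>M filt_measure P W T)
      = sets (restrict_space lborel {0..T} \<Otimes>\<^sub>M P)"
    by (rule sets_pair_measure_cong[OF refl])
  moreover have "(\<lambda>(s,\<omega>). u s \<omega>) \<in> borel_measurable (restrict_space lborel {0..T} \<Otimes>\<^sub>M filt_measure P W T)"
    using u assms(1) by (auto simp: UF_def progressive_def)
  ultimately have "(\<lambda>(s,\<omega>). u s \<omega>) \<in> borel_measurable (restrict_space lborel {0..T} \<Otimes>\<^sub>M P)"
    using measurable_cong_sets by blast
  with u show "u \<in> Uall P T Uset"
    by (simp add: Uall_def UF_def)
qed

lemma MF_eq_penalties: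
  assumes "\<And>y u. progressive P W T u \<Longrightarrow> (\<forall>s\<in>{0..T}. \<forall>\<omega>\<in>space P. u s \<omega> \<in> Uset) \<Longrightarrow>
             (\<integral>\<^sup>+\<omega>. (\<integral>\<^sup>+s\<in>{0..T}. ennreal ((norm (u s \<omega>))\<^sup>2) \<partial>lborel) \<partial>P) < \<infinity> \<Longrightarrow>
             (\<integral>\<^sup>+\<omega>. (SUP s\<in>{0..T}. ennreal ((norm (X y u s \<omega>))\<^sup>2)) \<partial>P) < \<infinity>"
  shows "MF P W T Uset X = penalties P (UF P W T Uset X x)"
proof -
  have "UF P W T Uset X y = UF P W T Uset X x" for y
    unfolding UF_def using assms by blast
  then show ?thesis
    unfolding MF_def penalties_def by blast
qed

theorem theorem3:
  fixes P :: "'w measure" and T :: real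
    and W :: "real \<Rightarrow> 'w \<Rightarrow> real^'m"
    and Uset :: "(real^'d) set"
    and b :: "real \<Rightarrow> real^'n \<Rightarrow> real^'d \<Rightarrow> real^'n"
    and \<sigma> :: "real \<Rightarrow> real^'n \<Rightarrow> real^'m^'n"
    and X :: "real^'n \<Rightarrow> (real \<Rightarrow> 'w \<Rightarrow> real^'d) \<Rightarrow> real \<Rightarrow> 'w \<Rightarrow> real^'n"
    and Lam :: "real^'n \<Rightarrow> real"
    and g :: "real \<Rightarrow> real^'n \<Rightarrow> real^'d \<Rightarrow> real"
    and x :: "real^'n"
  assumes T_pos: "0 < T"
    and BM: "brownian_motion P T W"
    and F_T: "sets P = nat_filt P W T"
    and b_cont: "continuous_on ({0..T} \<times> UNIV \<times> Uset) (\<lambda>(t,y,v). b t y v)"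
    and sigma_cont: "continuous_on ({0..T} \<times> UNIV) (\<lambda>(t,y). \<sigma> t y)"
    and lin_growth: "\<exists>C1. \<forall>t\<in>{0..T}. \<forall>y. \<forall>v\<in>Uset.
                        norm (b t y v) + norm (\<sigma> t y) \<le> C1 * (1 + norm y + norm v)"
    and lipschitz: "\<exists>L. \<forall>t\<in>{0..T}. \<forall>s\<in>{0..T}. \<forall>y z. \<forall>v\<in>Uset.
                        norm (b t y v - b s z v) + norm (\<sigma> t y - \<sigma> s z) \<le> L * (\<bar>t - s\<bar> + norm (y - z))"
    and X_init: "\<And>y u \<omega>. u \<in> Uall P T Uset \<Longrightarrow> \<omega> \<in> space P \<Longrightarrow> X y u 0 \<omega> = y"
    and X_meas: "\<And>y u. u \<in> Uall P T Uset \<Longrightarrow>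
                   (\<lambda>(s,\<omega>). X y u s \<omega>) \<in> borel_measurable (restrict_space lborel {0..T} \<Otimes>\<^sub>M P)"
    and X_moment: "\<And>y u. progressive P W T u \<Longrightarrow> (\<forall>s\<in>{0..T}. \<forall>\<omega>\<in>space P. u s \<omega> \<in> Uset) \<Longrightarrow>
                   (\<integral>\<^sup>+\<omega>. (\<integral>\<^sup>+s\<in>{0..T}. ennreal ((norm (u s \<omega>))\<^sup>2) \<partial>lborel) \<partial>P) < \<infinity> \<Longrightarrow>
                   (\<integral>\<^sup>+\<omega>. (SUP s\<in>{0..T}. ennreal ((norm (X y u s \<omega>))\<^sup>2)) \<partial>P) < \<infinity>"
    and Lam_meas: "Lam \<in> borel_measurable borel"
    and g_meas: "(\<lambda>(t,y,v). g t y v) \<in> borel_measurable borel"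
    and Lam_growth: "\<exists>C c. \<forall>y. \<bar>Lam y\<bar> \<le> C * (1 + norm y powr c)"
    and g_growth: "\<exists>C c. \<forall>t\<in>{0..T}. \<forall>y. \<forall>v\<in>Uset. \<bar>g t y v\<bar> \<le> C * (1 + norm y powr c + norm v powr c)"
  shows "(SUP u\<in>UF P W T Uset X x. Jval P T Lam g X x u) =
           (INF h\<in>MF P W T Uset X.
              Eer P (\<lambda>\<omega>. SUP u\<in>Uall P T Uset. ereal (reward T Lam g X x u \<omega> - h u \<omega>)))
         \<and> (let V = (SUP u\<in>UF P W T Uset X x. Jval P T Lam g X x u);
                hstar = (\<lambda>u \<omega>. reward T Lam g X x u \<omega> - real_of_ereal V)
            in \<bar>V\<bar> \<noteq> \<infinity> \<longrightarrow>
               hstar \<in> MF P W T Uset X \<and>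
               Eer P (\<lambda>\<omega>. SUP u\<in>Uall P T Uset. ereal (reward T Lam g X x u \<omega> - hstar u \<omega>)) =
                 (INF h\<in>MF P W T Uset X.
                    Eer P (\<lambda>\<omega>. SUP u\<in>Uall P T Uset. ereal (reward T Lam g X x u \<omega> - h u \<omega>))))"
proof -
  interpret prob_space P
    using BM by (simp add: brownian_motion_def)
  have UF_Uall: "UF P W T Uset X x \<subseteq> Uall P T Uset"
    using T_pos F_T by (intro UF_subset_Uall) auto
  have reward_meas: "reward T Lam g X x u \<in> borel_measurable P" if "u \<in> UF P W T Uset X x" for u
    using T_pos X_meas Lam_meas g_meas UF_Uall that
    by (intro reward_measurable) (auto simp: Uall_def)
  have MF: "MF P W T Uset X = penalties P (UF P W T Uset X x)"
    using X_moment by (rule MF_eq_penalties)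
  show ?thesis
    unfolding Let_def Jval_def MF dual_objective_def[symmetric]
    using strong_duality[where R = "reward T Lam g X x", OF UF_Uall reward_meas]
      strong_duality_attained[where R = "reward T Lam g X x", OF UF_Uall reward_meas]
    by simp
qed

end
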